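(* Let $K/F$ be a cyclic Galois extension of number fields of degree $m$ with $\mathrm{Gal}(K/F)=\langle\sigma\rangle$, and let $\mathcal{O}_F\subset\mathcal{O}_K$ be the rings of integers. Let $d\in\mathcal{O}_K^\times$ be such that $t^m-d$ is irreducible in the skew polynomial ring $K[t;\sigma]$, so that $(K/F,\sigma,d)=K[t;\sigma]/K[t;\sigma](t^m-d)$ is a nonassociative cyclic division algebra, and let $\Lambda=\mathcal{O}_K[t;\sigma]/\mathcal{O}_K[t;\sigma](t^m-d)$ be its natural order. Let $\mathcal{I}$ be a non-zero ideal of $\mathcal{O}_F$. Define $\overline{\sigma}$ on $\mathcal{O}_K/\mathcal{I}\mathcal{O}_K$ by $\overline{\sigma}(u+\mathcal{I}\mathcal{O}_K)=\sigma(u)+\mathcal{I}\mathcal{O}_K$ and put $\bar d=d+\mathcal{I}\mathcal{O}_K$. Then $\mathcal{I}\Lambda$ is a two-sided ideal of $\Lambda$ and $$\Lambda/\mathcal{I}\Lambda\cong\big((\mathcal{O}_K/\mathcal{I}\mathcal{O}_K)/(\mathcal{O}_F/\mathcal{I}),\overline{\sigma},\bar d\big),$$ a generalized nonassociative cyclic algebra over $\mathcal{O}_F/\mathcal{I}$ (the isomorphism being induced by reducing coefficients modulo $\mathcal{I}\mathcal{O}_K$).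
   Context: For a unital associative ring $S$ and an injective ring endomorphism $\sigma$ of $S$, $S[t;\sigma]$ denotes the skew polynomial ring of polynomials $\sum a_it^i$, $a_i\in S$, with multiplication determined by $ta=\sigma(a)t$. For a monic $f\in S[t;\sigma]$ of degree $m$, every $g$ has a unique right division $g=qf+r$ with $\deg r<m$; the Petit algebra $S[t;\sigma]/S[t;\sigma]f$ is the additive group of polynomials of degree $<m$ with multiplication $g\circ h=gh \bmod_r f$ (remainder of right division by $f$); it is a unital, in general nonassociative, ring. For commutative rings $S_0\subset S$ with $S_0\subset\mathrm{Fix}(\sigma)$ and $c\in S$, the (generalized) nonassociative cyclic algebra $(S/S_0,\sigma,c)$ is the Petit algebra $S[t;\sigma]/S[t;\sigma](t^m-c)$, regarded as an $S_0$-algebra. Elements of $\Lambda$ are polynomials $\sum_{i=0}^{m-1}a_it^i$ with $a_i\in\mathcal{O}_K$, and $\mathcal{I}\Lambda=\{\sum_{i=0}^{m-1}a_it^i: a_i\in\mathcal{I}\mathcal{O}_K\}$. *)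

theory Defs
  imports "HOL-Algebra.QuotRing" "HOL-Computational_Algebra.Polynomial"
begin

text \<open>A subset of a commutative ring type, closed under the ring operations, viewed as a
  HOL-Algebra ring record (used for K itself, O_K and O_F).\<close>
definition ring_on :: "'a::comm_ring_1 set \<Rightarrow> 'a ring" where
  "ring_on A = \<lparr>carrier = A, monoid.mult = (*), one = 1, zero = 0, add = (+)\<rparr>"

text \<open>Algebraic integers of a field of characteristic 0 (roots of monic integer polynomials);
  for a number field K this is the ring of integers O_K.\<close>
definition algebraic_integers :: "'a::field_char_0 set" where
  "algebraic_integers = {x. \<exists>p::int poly. lead_coeff p = 1 \<and> poly (map_poly of_int p) x = 0}"

text \<open>Finite dimensionality over Q (K a number field = the type is finite-dimensional over Q).\<close>
definition finite_dim_over_Q :: "'a::field_char_0 set \<Rightarrow> bool" where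
  "finite_dim_over_Q A \<longleftrightarrow>
     (\<exists>B. set B \<subseteq> A \<and> (\<forall>x\<in>A. \<exists>c::nat \<Rightarrow> rat. x = (\<Sum>i<length B. of_rat (c i) * B ! i)))"

definition spoly :: "('b,'m) ring_scheme \<Rightarrow> (nat \<Rightarrow> 'b) set" where
  "spoly R = {p. (\<forall>i. p i \<in> carrier R) \<and> finite {i. p i \<noteq> \<zero>\<^bsub>R\<^esub>}}"

definition pzero :: "('b,'m) ring_scheme \<Rightarrow> nat \<Rightarrow> 'b" where
  "pzero R = (\<lambda>i. \<zero>\<^bsub>R\<^esub>)"

definition pone :: "('b,'m) ring_scheme \<Rightarrow> nat \<Rightarrow> 'b" where
  "pone R = (\<lambda>i. if i = 0 then \<one>\<^bsub>R\<^esub> else \<zero>\<^bsub>R\<^esub>)"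

definition padd :: "('b,'m) ring_scheme \<Rightarrow> (nat \<Rightarrow> 'b) \<Rightarrow> (nat \<Rightarrow> 'b) \<Rightarrow> nat \<Rightarrow> 'b" where
  "padd R p q = (\<lambda>i. p i \<oplus>\<^bsub>R\<^esub> q i)"

definition pneg :: "('b,'m) ring_scheme \<Rightarrow> (nat \<Rightarrow> 'b) \<Rightarrow> nat \<Rightarrow> 'b" where
  "pneg R p = (\<lambda>i. \<ominus>\<^bsub>R\<^esub> p i)"

definition psmul :: "('b,'m) ring_scheme \<Rightarrow> 'b \<Rightarrow> (nat \<Rightarrow> 'b) \<Rightarrow> nat \<Rightarrow> 'b" where
  "psmul R a p = (\<lambda>i. a \<otimes>\<^bsub>R\<^esub> p i)"

definition skew_mult ::
  "('b,'m) ring_scheme \<Rightarrow> ('b \<Rightarrow> 'b) \<Rightarrow> (nat \<Rightarrow> 'b) \<Rightarrow> (nat \<Rightarrow> 'b) \<Rightarrow> nat \<Rightarrow> 'b" where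
  "skew_mult R \<sigma> p q = (\<lambda>n. \<Oplus>\<^bsub>R\<^esub> i\<in>{..n}. p i \<otimes>\<^bsub>R\<^esub> (\<sigma> ^^ i) (q (n - i)))"

definition sdeg :: "('b,'m) ring_scheme \<Rightarrow> (nat \<Rightarrow> 'b) \<Rightarrow> nat" where
  "sdeg R f = (if \<forall>i. f i = \<zero>\<^bsub>R\<^esub> then 0 else Max {i. f i \<noteq> \<zero>\<^bsub>R\<^esub>})"

definition skew_unit :: "('b,'m) ring_scheme \<Rightarrow> ('b \<Rightarrow> 'b) \<Rightarrow> (nat \<Rightarrow> 'b) \<Rightarrow> bool" where
  "skew_unit R \<sigma> g \<longleftrightarrow> g \<in> spoly R \<and>
     (\<exists>h\<in>spoly R. skew_mult R \<sigma> g h = pone R \<and> skew_mult R \<sigma> h g = pone R)"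

definition skew_irreducible :: "('b,'m) ring_scheme \<Rightarrow> ('b \<Rightarrow> 'b) \<Rightarrow> (nat \<Rightarrow> 'b) \<Rightarrow> bool" where
  "skew_irreducible R \<sigma> f \<longleftrightarrow> f \<in> spoly R \<and> f \<noteq> pzero R \<and> \<not> skew_unit R \<sigma> f \<and>
     (\<forall>g\<in>spoly R. \<forall>h\<in>spoly R. f = skew_mult R \<sigma> g h \<longrightarrow> skew_unit R \<sigma> g \<or> skew_unit R \<sigma> h)"

definition right_rem ::
  "('b,'m) ring_scheme \<Rightarrow> ('b \<Rightarrow> 'b) \<Rightarrow> (nat \<Rightarrow> 'b) \<Rightarrow> (nat \<Rightarrow> 'b) \<Rightarrow> nat \<Rightarrow> 'b" where
  "right_rem R \<sigma> g f = (THE r. r \<in> spoly R \<and> (\<forall>i\<ge>sdeg R f. r i = \<zero>\<^bsub>R\<^esub>) \<and>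
       (\<exists>q\<in>spoly R. g = padd R (skew_mult R \<sigma> q f) r))"

definition petit_carrier :: "('b,'m) ring_scheme \<Rightarrow> (nat \<Rightarrow> 'b) \<Rightarrow> (nat \<Rightarrow> 'b) set" where
  "petit_carrier R f = {p \<in> spoly R. \<forall>i\<ge>sdeg R f. p i = \<zero>\<^bsub>R\<^esub>}"

definition petit_mult ::
  "('b,'m) ring_scheme \<Rightarrow> ('b \<Rightarrow> 'b) \<Rightarrow> (nat \<Rightarrow> 'b) \<Rightarrow> (nat \<Rightarrow> 'b) \<Rightarrow> (nat \<Rightarrow> 'b) \<Rightarrow> nat \<Rightarrow> 'b" where
  "petit_mult R \<sigma> f p q = right_rem R \<sigma> (skew_mult R \<sigma> p q) f"

text \<open>t^m - c (for m > 0)\<close>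
definition cyc_poly :: "('b,'m) ring_scheme \<Rightarrow> nat \<Rightarrow> 'b \<Rightarrow> nat \<Rightarrow> 'b" where
  "cyc_poly R m c = (\<lambda>i. if i = m then \<one>\<^bsub>R\<^esub> else if i = 0 then \<ominus>\<^bsub>R\<^esub> c else \<zero>\<^bsub>R\<^esub>)"

definition sigma_bar :: "('b,'m) ring_scheme \<Rightarrow> 'b set \<Rightarrow> ('b \<Rightarrow> 'b) \<Rightarrow> 'b set \<Rightarrow> 'b set" where
  "sigma_bar R J \<sigma> X = a_r_coset R J (\<sigma> (SOME u. u \<in> X))"

definition reduce_coeffs :: "('b,'m) ring_scheme \<Rightarrow> 'b set \<Rightarrow> (nat \<Rightarrow> 'b) \<Rightarrow> nat \<Rightarrow> 'b set" where
  "reduce_coeffs R J p = (\<lambda>i. a_r_coset R J (p i))"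

end

theory Submission
  imports Defs "Jordan_Normal_Form.Char_Poly"
begin

(* Multiplication in a Petit algebra is "multiply, then take the remainder of right division by
   t^m - d". Because t^m - d is monic, this division exists and is unique over any commutative ring
   R with an endomorphism sigma. Reducing coefficients modulo a sigma-stable ideal J intertwines
   sigma and sigma-bar, so it turns a division identity g = q (t^m - d) + r over R into one over R/J;
   by uniqueness, reduction commutes with the Petit multiplications. Its kernel on Lambda, the
   polynomials with all coefficients in J, is therefore a two-sided ideal, and every element of the
   Petit algebra over R/J lifts coefficientwise; sigma-bar is injective because sigma^m = id.
   Here R = O_K, a ring because sums and products of eigenvalues of integer matrices are again
   such eigenvalues, and J = I O_K is sigma-stable because sigma fixes I pointwise. *)

hide_const (open) Ring_Hom.ring_hom

section \<open>Algebraic integers form a ring\<close>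

definition int_matrix_eigenvalue :: "'b set \<Rightarrow> 'a::field \<Rightarrow> bool" where
  "int_matrix_eigenvalue S x \<longleftrightarrow> finite S \<and>
     (\<exists>v a. (\<exists>i\<in>S. v i \<noteq> 0) \<and> (\<forall>i\<in>S. x * v i = (\<Sum>j\<in>S. of_int (a i j) * v j)))"

lemma algebraic_int_if_int_matrix_eigenvalue_nat:
  fixes x :: "'a::field_char_0" and n :: nat
  assumes "int_matrix_eigenvalue {..<n} x"
  shows "algebraic_int x"
proof -
  obtain v a i0 where i0: "i0 < n" "v i0 \<noteq> 0"
    and eq: "\<forall>i<n. x * v i = (\<Sum>j<n. of_int (a i j) * v j)"
    using assms unfolding int_matrix_eigenvalue_def by auto
  define A :: "int mat" where "A = mat n n (\<lambda>(i,j). a i j)"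
  define B where "B = map_mat (of_int :: int \<Rightarrow> 'a) A"
  have A: "A \<in> carrier_mat n n" and B: "B \<in> carrier_mat n n" by (simp_all add: A_def B_def)
  define w where "w = vec n v"
  have "B *\<^sub>v w = x \<cdot>\<^sub>v w"
  proof (rule eq_vecI)
    fix i assume "i < dim_vec (x \<cdot>\<^sub>v w)"
    hence i: "i < n" by (simp add: w_def)
    have "(B *\<^sub>v w) $ i = (\<Sum>j<n. of_int (a i j) * v j)"
      using i B by (simp add: mult_mat_vec_def scalar_prod_def w_def B_def A_def lessThan_atLeast0)
    also have "\<dots> = x * v i" using eq i by simp
    finally show "(B *\<^sub>v w) $ i = (x \<cdot>\<^sub>v w) $ i" using i by (simp add: w_def)
  qed (use B in \<open>simp add: w_def\<close>)
  moreover have "w \<noteq> 0\<^sub>v n" using i0 by (auto simp: w_def dest: arg_cong[of _ _ "\<lambda>u. u $ i0"])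
  ultimately have "eigenvalue B x"
    unfolding eigenvalue_def eigenvector_def using B by (intro exI[of _ w]) (simp add: w_def)
  hence "poly (char_poly B) x = 0" using eigenvalue_root_char_poly[OF B] by simp
  moreover have "char_poly B = of_int_poly (char_poly A)"
    using of_int_hom.char_poly_hom[OF A] by (simp add: B_def)
  moreover have "lead_coeff (char_poly A) = 1" using degree_monic_char_poly[OF A] by simp
  ultimately show ?thesis unfolding algebraic_int_altdef_ipoly by auto
qed

lemma algebraic_int_if_int_matrix_eigenvalue:
  fixes x :: "'a::field_char_0"
  assumes "int_matrix_eigenvalue S x"
  shows "algebraic_int x"
proof -
  obtain v a where S: "finite S" "\<exists>i\<in>S. v i \<noteq> 0"
    and eq: "\<forall>i\<in>S. x * v i = (\<Sum>j\<in>S. of_int (a i j) * v j)"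
    using assms unfolding int_matrix_eigenvalue_def by blast
  obtain g where g: "bij_betw g {..<card S} S"
    using ex_bij_betw_nat_finite[OF S(1)] by (auto simp: lessThan_atLeast0)
  have "x * v (g i) = (\<Sum>j<card S. of_int (a (g i) (g j)) * v (g j))" if "i < card S" for i
  proof -
    have "g i \<in> S" using g that by (auto simp: bij_betw_def)
    thus ?thesis using eq sum.reindex_bij_betw[OF g, of "\<lambda>j. of_int (a (g i) j) * v j"] by simp
  qed
  moreover have "\<exists>i<card S. v (g i) \<noteq> 0"
    using S(2) g by (metis bij_betw_iff_bijections lessThan_iff)
  ultimately have "int_matrix_eigenvalue {..<card S} x"
    unfolding int_matrix_eigenvalue_def
    by (intro conjI exI[of _ "\<lambda>i. v (g i)"] exI[of _ "\<lambda>i j. a (g i) (g j)"]) auto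
  thus ?thesis by (rule algebraic_int_if_int_matrix_eigenvalue_nat)
qed

lemma algebraic_int_imp_int_matrix_eigenvalue:
  fixes x :: "'a::field_char_0"
  assumes "algebraic_int x"
  obtains n :: nat where "int_matrix_eigenvalue {..<n} x"
proof -
  obtain p :: "int poly" where p: "lead_coeff p = 1" "poly (of_int_poly p) x = 0"
    using assms unfolding algebraic_int_altdef_ipoly by blast
  define n where "n = degree p"
  have "0 = (\<Sum>i\<le>n. of_int (coeff p i) * x ^ i)"
    using p by (simp add: poly_altdef degree_map_poly coeff_map_poly n_def)
  also have "\<dots> = (\<Sum>i<n. of_int (coeff p i) * x ^ i) + x ^ n"
    using p(1) by (simp add: lessThan_Suc_atMost[symmetric] n_def)
  finally have xn: "x ^ n = (\<Sum>j<n. of_int (- coeff p j) * x ^ j)"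
    by (simp add: sum_negf eq_neg_iff_add_eq_0 add.commute)
  hence "0 < n" by (cases n) auto
  \<comment> \<open>the transpose of the companion matrix of p, acting on the vector (x^i)\<close>
  define a where "a = (\<lambda>i j. if Suc i < n then (if j = Suc i then 1 else 0) else - coeff p j)"
  have "x * x ^ i = (\<Sum>j<n. of_int (a i j) * x ^ j)" if "i < n" for i
  proof (cases "Suc i < n")
    case True
    have "(\<Sum>j<n. of_int (a i j) * x ^ j) = (\<Sum>j<n. if j = Suc i then x ^ j else 0)"
      by (rule sum.cong) (auto simp: a_def True)
    thus ?thesis using True by (simp add: sum.delta')
  next
    case False
    hence "n = Suc i" using that by simp
    hence "x * x ^ i = x ^ n" by simp
    thus ?thesis using xn False by (simp add: a_def)
  qed
  hence "int_matrix_eigenvalue {..<n} x"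
    unfolding int_matrix_eigenvalue_def using \<open>0 < n\<close>
    by (intro conjI exI[of _ "\<lambda>i. x ^ i"] exI[of _ a]) auto
  thus ?thesis by (rule that)
qed

lemma int_matrix_eigenvalue_times:
  assumes "int_matrix_eigenvalue S x" "int_matrix_eigenvalue T y"
  shows "int_matrix_eigenvalue (S \<times> T) (x * y)"
proof -
  obtain v a where S: "finite S" "\<exists>i\<in>S. v i \<noteq> 0"
    and x: "\<forall>i\<in>S. x * v i = (\<Sum>k\<in>S. of_int (a i k) * v k)"
    using assms(1) unfolding int_matrix_eigenvalue_def by blast
  obtain w b where T: "finite T" "\<exists>j\<in>T. w j \<noteq> 0"
    and y: "\<forall>j\<in>T. y * w j = (\<Sum>l\<in>T. of_int (b j l) * w l)"
    using assms(2) unfolding int_matrix_eigenvalue_def by blast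
  have "x * y * (v i * w j) = (\<Sum>(k, l)\<in>S \<times> T. of_int (a i k * b j l) * (v k * w l))"
    if "i \<in> S" "j \<in> T" for i j
  proof -
    have "x * y * (v i * w j) = (x * v i) * (y * w j)" by (simp add: mult_ac)
    also have "\<dots> = (\<Sum>k\<in>S. of_int (a i k) * v k) * (\<Sum>l\<in>T. of_int (b j l) * w l)"
      using x y that by simp
    also have "\<dots> = (\<Sum>(k, l)\<in>S \<times> T. of_int (a i k * b j l) * (v k * w l))"
      by (simp add: sum_product sum.cartesian_product mult_ac)
    finally show ?thesis .
  qed
  thus ?thesis using S T unfolding int_matrix_eigenvalue_def
    by (intro conjI exI[of _ "\<lambda>(i, j). v i * w j"] exI[of _ "\<lambda>(i, j) (k, l). a i k * b j l"])
       (auto simp: case_prod_unfold)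
qed

lemma int_matrix_eigenvalue_plus:
  assumes "int_matrix_eigenvalue S x" "int_matrix_eigenvalue T y"
  shows "int_matrix_eigenvalue (S \<times> T) (x + y)"
proof -
  obtain v a where S: "finite S" "\<exists>i\<in>S. v i \<noteq> 0"
    and x: "\<forall>i\<in>S. x * v i = (\<Sum>k\<in>S. of_int (a i k) * v k)"
    using assms(1) unfolding int_matrix_eigenvalue_def by blast
  obtain w b where T: "finite T" "\<exists>j\<in>T. w j \<noteq> 0"
    and y: "\<forall>j\<in>T. y * w j = (\<Sum>l\<in>T. of_int (b j l) * w l)"
    using assms(2) unfolding int_matrix_eigenvalue_def by blast
  \<comment> \<open>the Kronecker sum of the two integer matrices\<close>
  define c where "c = (\<lambda>(i, j) (k, l). (if l = j then a i k else 0) + (if k = i then b j l else 0))"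
  have "(x + y) * (v i * w j) = (\<Sum>kl\<in>S \<times> T. of_int (c (i, j) kl) * (v (fst kl) * w (snd kl)))"
    if "i \<in> S" "j \<in> T" for i j
  proof -
    have "(x + y) * (v i * w j) = (x * v i) * w j + v i * (y * w j)" by (simp add: algebra_simps)
    also have "\<dots> = (\<Sum>k\<in>S. of_int (a i k) * v k) * w j + v i * (\<Sum>l\<in>T. of_int (b j l) * w l)"
      using x y that by simp
    also have "\<dots> = (\<Sum>k\<in>S. \<Sum>l\<in>T. if l = j then of_int (a i k) * (v k * w l) else 0)
                  + (\<Sum>l\<in>T. \<Sum>k\<in>S. if k = i then of_int (b j l) * (v k * w l) else 0)"
      using S(1) T(1) that by (simp add: sum.delta' sum_distrib_left sum_distrib_right mult_ac)
    also have "\<dots> = (\<Sum>k\<in>S. \<Sum>l\<in>T. of_int (c (i, j) (k, l)) * (v k * w l))"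
      by (subst (2) sum.swap) (auto simp: c_def sum.distrib[symmetric] algebra_simps intro!: sum.cong)
    also have "\<dots> = (\<Sum>kl\<in>S \<times> T. of_int (c (i, j) kl) * (v (fst kl) * w (snd kl)))"
      by (simp add: sum.cartesian_product case_prod_unfold)
    finally show ?thesis .
  qed
  thus ?thesis using S T unfolding int_matrix_eigenvalue_def
    by (intro conjI exI[of _ "\<lambda>(i, j). v i * w j"] exI[of _ c]) (auto simp: case_prod_unfold)
qed

lemma algebraic_int_times:
  fixes x y :: "'a::field_char_0"
  assumes "algebraic_int x" "algebraic_int y"
  shows "algebraic_int (x * y)"
  using assms by (elim algebraic_int_imp_int_matrix_eigenvalue)
    (blast intro: algebraic_int_if_int_matrix_eigenvalue int_matrix_eigenvalue_times)

lemma algebraic_int_plus: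
  fixes x y :: "'a::field_char_0"
  assumes "algebraic_int x" "algebraic_int y"
  shows "algebraic_int (x + y)"
  using assms by (elim algebraic_int_imp_int_matrix_eigenvalue)
    (blast intro: algebraic_int_if_int_matrix_eigenvalue int_matrix_eigenvalue_plus)

section \<open>Right division by t^m - c in skew polynomial rings\<close>

context cring
begin

lemma minus_eq_zero_imp_eq: "x \<in> carrier R \<Longrightarrow> y \<in> carrier R \<Longrightarrow> x \<ominus> y = \<zero> \<Longrightarrow> x = y"
  by (metis a_minus_def add.inv_closed add.inv_inv minus_equality)

lemma spoly_carrier: "p \<in> spoly R \<Longrightarrow> p i \<in> carrier R"
  by (simp add: spoly_def)

lemma spoly_bounded:
  assumes "p \<in> spoly R"
  obtains B where "\<And>i. B < i \<Longrightarrow> p i = \<zero>"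
proof -
  have "finite {i. p i \<noteq> \<zero>}" using assms by (simp add: spoly_def)
  then obtain B where "\<forall>i\<in>{i. p i \<noteq> \<zero>}. i \<le> B" using finite_nat_set_iff_bounded_le by blast
  thus ?thesis using that by (metis (mono_tags) mem_Collect_eq not_le)
qed

lemma spolyI:
  assumes "\<And>i. p i \<in> carrier R" and "\<And>i. B < i \<Longrightarrow> p i = \<zero>"
  shows "p \<in> spoly R"
proof -
  have "{i. p i \<noteq> \<zero>} \<subseteq> {..B}" using assms(2) by (force simp: not_less[symmetric])
  thus ?thesis using assms(1) unfolding spoly_def by (auto intro: finite_subset)
qed

lemma pzero_spoly [simp]: "pzero R \<in> spoly R"
  by (simp add: spoly_def pzero_def)

lemma padd_spoly:
  assumes p: "p \<in> spoly R" and q: "q \<in> spoly R"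
  shows "padd R p q \<in> spoly R"
proof -
  obtain Bp where Bp: "\<And>i. Bp < i \<Longrightarrow> p i = \<zero>" using spoly_bounded[OF p] by blast
  obtain Bq where Bq: "\<And>i. Bq < i \<Longrightarrow> q i = \<zero>" using spoly_bounded[OF q] by blast
  show ?thesis
    by (rule spolyI[of _ "max Bp Bq"]) (simp_all add: padd_def Bp Bq spoly_carrier[OF p] spoly_carrier[OF q])
qed

lemma pneg_spoly:
  assumes p: "p \<in> spoly R"
  shows "pneg R p \<in> spoly R"
proof -
  obtain B where "\<And>i. B < i \<Longrightarrow> p i = \<zero>" using spoly_bounded[OF p] by blast
  thus ?thesis by (intro spolyI[of _ B]) (simp_all add: pneg_def spoly_carrier[OF p])
qed

lemma sdeg_cyc_poly:
  assumes "\<one> \<noteq> \<zero>"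
  shows "sdeg R (cyc_poly R m c) = m"
proof -
  have "Max {i. cyc_poly R m c i \<noteq> \<zero>} = m"
    by (rule Max_eqI) (use assms in \<open>auto simp: cyc_poly_def split: if_splits intro: finite_subset[of _ "{..m}"]\<close>)
  moreover have "cyc_poly R m c m \<noteq> \<zero>" using assms by (simp add: cyc_poly_def)
  ultimately show ?thesis unfolding sdeg_def by auto
qed

text \<open>In the zero ring every polynomial vanishes, so the degree of t^m - c is irrelevant there.\<close>
lemma petit_carrier_cyc_poly:
  "petit_carrier R (cyc_poly R m c) = {p \<in> spoly R. \<forall>i\<ge>m. p i = \<zero>}"
proof (cases "\<one> = \<zero>")
  case True
  have "\<And>p i. p \<in> spoly R \<Longrightarrow> p i = \<zero>" using True by (metis spoly_carrier l_one l_null)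
  thus ?thesis unfolding petit_carrier_def by blast
next
  case False
  thus ?thesis unfolding petit_carrier_def using sdeg_cyc_poly by simp
qed

lemma right_rem_altdef:
  "right_rem R \<sigma> g f = (THE r. r \<in> petit_carrier R f \<and> (\<exists>q\<in>spoly R. g = padd R (skew_mult R \<sigma> q f) r))"
  by (simp add: right_rem_def petit_carrier_def conj_assoc)

end

locale skew_poly = cring R for R (structure) +
  fixes \<sigma>
  assumes sigma_hom: "\<sigma> \<in> ring_hom R R"
begin

lemma sigma_pow_hom: "\<sigma> ^^ i \<in> ring_hom R R"
proof (induction i)
  case 0
  show ?case by (simp only: funpow.simps(1) id_ring_hom)
next
  case (Suc i)
  show ?case using ring_hom_trans[OF Suc.IH sigma_hom] by (simp only: funpow.simps(2))
qed

lemma sigma_pow_ring_hom_cring: "ring_hom_cring R R (\<sigma> ^^ i)"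
  by (rule ring_hom_cringI[OF ring_hom_ringI2[OF ring_axioms ring_axioms sigma_pow_hom] is_cring is_cring])

sublocale sigma: ring_hom_cring R R \<sigma>
  using sigma_pow_ring_hom_cring[of 1] by simp

lemma sigma_pow_closed [simp]: "x \<in> carrier R \<Longrightarrow> (\<sigma> ^^ i) x \<in> carrier R"
  using ring_hom_closed[OF sigma_pow_hom] by blast

lemma sigma_pow_one [simp]: "(\<sigma> ^^ i) \<one> = \<one>"
  using ring_hom_one[OF sigma_pow_hom] by blast

lemma sigma_pow_zero [simp]: "(\<sigma> ^^ i) \<zero> = \<zero>"
  using ring_hom_zero[OF sigma_pow_hom] ring_axioms by blast

lemma sigma_pow_minus [simp]: "x \<in> carrier R \<Longrightarrow> (\<sigma> ^^ i) (\<ominus> x) = \<ominus> (\<sigma> ^^ i) x"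
  using ring_hom_cring.hom_a_inv[OF sigma_pow_ring_hom_cring] by blast

lemma skew_mult_closed:
  assumes "\<And>i. p i \<in> carrier R" and "\<And>i. q i \<in> carrier R"
  shows "skew_mult R \<sigma> p q n \<in> carrier R"
  unfolding skew_mult_def using assms by (intro finsum_closed) auto

lemma skew_mult_spoly:
  assumes p: "p \<in> spoly R" and q: "q \<in> spoly R"
  shows "skew_mult R \<sigma> p q \<in> spoly R"
proof -
  obtain Bp where Bp: "\<And>i. Bp < i \<Longrightarrow> p i = \<zero>" using spoly_bounded[OF p] by blast
  obtain Bq where Bq: "\<And>i. Bq < i \<Longrightarrow> q i = \<zero>" using spoly_bounded[OF q] by blast
  show ?thesis
  proof (rule spolyI[of _ "Bp + Bq"])
    show "skew_mult R \<sigma> p q i \<in> carrier R" for i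
      using skew_mult_closed spoly_carrier p q by blast
    fix n assume n: "Bp + Bq < n"
    have "skew_mult R \<sigma> p q n = (\<Oplus>i\<in>{..n}. \<zero>)"
      unfolding skew_mult_def
    proof (rule finsum_cong')
      show "p i \<otimes> (\<sigma> ^^ i) (q (n - i)) = \<zero>" if "i \<in> {..n}" for i
        using Bp[of i] Bq[of "n - i"] n spoly_carrier[OF p] spoly_carrier[OF q]
        by (cases "Bp < i") auto
    qed (use spoly_carrier[OF p] spoly_carrier[OF q] in auto)
    thus "skew_mult R \<sigma> p q n = \<zero>" by simp
  qed
qed

lemma skew_mult_pzero_right: "(\<And>i. p i \<in> carrier R) \<Longrightarrow> skew_mult R \<sigma> p (pzero R) = pzero R"
  by (rule ext) (simp add: skew_mult_def pzero_def finsum_zero)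

lemma skew_mult_pzero_left: "(\<And>i. q i \<in> carrier R) \<Longrightarrow> skew_mult R \<sigma> (pzero R) q = pzero R"
  by (rule ext) (simp add: skew_mult_def pzero_def finsum_zero)

end

locale cyc_division = skew_poly +
  fixes m :: nat and c
  assumes m_pos: "0 < m" and c_carrier: "c \<in> carrier R"
begin

text \<open>The coefficients of q (t^m - c).\<close>
definition cyc_mult where
  "cyc_mult q n = (if m \<le> n then q (n - m) else \<zero>) \<ominus> q n \<otimes> (\<sigma> ^^ n) c"

lemma cyc_mult_pzero: "cyc_mult (pzero R) n = \<zero>"
  by (simp add: cyc_mult_def pzero_def c_carrier a_minus_def)

lemma cyc_mult_closed: "(\<And>i. q i \<in> carrier R) \<Longrightarrow> cyc_mult q n \<in> carrier R"
  by (simp add: cyc_mult_def c_carrier)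

lemma skew_mult_cyc_poly:
  assumes q: "\<And>i. q i \<in> carrier R"
  shows "skew_mult R \<sigma> q (cyc_poly R m c) = cyc_mult q"
proof
  fix n
  define a where "a i = (if i = n - m then (if m \<le> n then q (n - m) else \<zero>) else \<zero>)" for i
  define b where "b i = (if i = n then \<ominus> (q n \<otimes> (\<sigma> ^^ n) c) else \<zero>)" for i
  have ab: "a \<in> {..n} \<rightarrow> carrier R" "b \<in> {..n} \<rightarrow> carrier R"
    using q c_carrier by (auto simp: a_def b_def)
  have "skew_mult R \<sigma> q (cyc_poly R m c) n = (\<Oplus>i\<in>{..n}. a i \<oplus> b i)"
    unfolding skew_mult_def
  proof (rule finsum_cong')
    show "q i \<otimes> (\<sigma> ^^ i) (cyc_poly R m c (n - i)) = a i \<oplus> b i" if "i \<in> {..n}" for i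
      using that q c_carrier m_pos by (auto simp: a_def b_def cyc_poly_def r_minus)
  qed (use q c_carrier in \<open>auto simp: a_def b_def\<close>)
  also have "\<dots> = (\<Oplus>i\<in>{..n}. a i) \<oplus> (\<Oplus>i\<in>{..n}. b i)"
    using ab by (rule finsum_addf)
  also have "(\<Oplus>i\<in>{..n}. a i) = (if m \<le> n then q (n - m) else \<zero>)"
    using add.finprod_singleton_swap[of "n - m" "{..n}" "\<lambda>_. if m \<le> n then q (n - m) else \<zero>"] q
    by (auto simp: a_def)
  also have "(\<Oplus>i\<in>{..n}. b i) = \<ominus> (q n \<otimes> (\<sigma> ^^ n) c)"
    using add.finprod_singleton_swap[of n "{..n}" "\<lambda>_. \<ominus> (q n \<otimes> (\<sigma> ^^ n) c)"] q c_carrier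
    by (auto simp: b_def)
  finally show "skew_mult R \<sigma> q (cyc_poly R m c) n = cyc_mult q n"
    by (simp add: cyc_mult_def a_minus_def)
qed

lemma cyc_mult_padd:
  assumes p: "\<And>i. p i \<in> carrier R" and q: "\<And>i. q i \<in> carrier R"
  shows "cyc_mult (padd R p q) n = cyc_mult p n \<oplus> cyc_mult q n"
proof -
  define x y s where "x = (if m \<le> n then p (n - m) else \<zero>)" and "y = (if m \<le> n then q (n - m) else \<zero>)"
    and "s = (\<sigma> ^^ n) c"
  have "x \<in> carrier R" "y \<in> carrier R" "s \<in> carrier R" "p n \<in> carrier R" "q n \<in> carrier R"
    using p q c_carrier by (simp_all add: x_def y_def s_def)
  hence "(x \<oplus> y) \<ominus> (p n \<oplus> q n) \<otimes> s = (x \<ominus> p n \<otimes> s) \<oplus> (y \<ominus> q n \<otimes> s)" by algebra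
  moreover have "cyc_mult (padd R p q) n = (x \<oplus> y) \<ominus> (p n \<oplus> q n) \<otimes> s"
    unfolding cyc_mult_def padd_def x_def y_def s_def by (cases "m \<le> n") simp_all
  ultimately show ?thesis by (simp add: cyc_mult_def x_def y_def s_def)
qed

lemma cyc_mult_diff:
  assumes p: "\<And>i. p i \<in> carrier R" and q: "\<And>i. q i \<in> carrier R"
  shows "cyc_mult (\<lambda>i. p i \<ominus> q i) n = cyc_mult p n \<ominus> cyc_mult q n"
proof -
  define x y s where "x = (if m \<le> n then p (n - m) else \<zero>)" and "y = (if m \<le> n then q (n - m) else \<zero>)"
    and "s = (\<sigma> ^^ n) c"
  have "x \<in> carrier R" "y \<in> carrier R" "s \<in> carrier R" "p n \<in> carrier R" "q n \<in> carrier R"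
    using p q c_carrier by (simp_all add: x_def y_def s_def)
  hence "(x \<ominus> y) \<ominus> (p n \<ominus> q n) \<otimes> s = (x \<ominus> p n \<otimes> s) \<ominus> (y \<ominus> q n \<otimes> s)" by algebra
  moreover have "cyc_mult (\<lambda>i. p i \<ominus> q i) n = (x \<ominus> y) \<ominus> (p n \<ominus> q n) \<otimes> s"
    unfolding cyc_mult_def x_def y_def s_def by (cases "m \<le> n") (simp_all add: a_minus_def)
  ultimately show ?thesis by (simp add: cyc_mult_def x_def y_def s_def)
qed

lemma cyc_mult_monomial:
  assumes "a \<in> carrier R"
  shows "cyc_mult (\<lambda>i. if i = k then a else \<zero>) n
           = (if n = k + m then a else \<zero>) \<ominus> (if n = k then a \<otimes> (\<sigma> ^^ k) c else \<zero>)"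
  using assms c_carrier m_pos unfolding cyc_mult_def by auto

text \<open>Comparing coefficients from the top down: q k = q (k + m) \<sigma>^(k+m)(c) for all k.\<close>
lemma cyc_mult_high_zero_imp_zero:
  assumes q: "q \<in> spoly R" and high: "\<And>n. m \<le> n \<Longrightarrow> cyc_mult q n = \<zero>"
  shows "q k = \<zero>"
proof -
  obtain B where B: "\<And>i. B < i \<Longrightarrow> q i = \<zero>" using spoly_bounded[OF q] by blast
  have step: "q k = q (k + m) \<otimes> (\<sigma> ^^ (k + m)) c" for k
  proof -
    have "q k \<ominus> q (k + m) \<otimes> (\<sigma> ^^ (k + m)) c = \<zero>"
      using high[of "k + m"] by (simp add: cyc_mult_def)
    thus ?thesis using spoly_carrier[OF q] c_carrier by (simp add: minus_eq_zero_imp_eq)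
  qed
  show ?thesis
  proof (induction "B - k" arbitrary: k rule: less_induct)
    case less
    show ?case
    proof (cases "B < k")
      case False
      hence "q (k + m) = \<zero>" using less m_pos by (cases "B < k + m") (auto simp: B)
      thus ?thesis using step[of k] c_carrier by simp
    qed (rule B)
  qed
qed

lemma cyc_mult_cancel_top:
  assumes g: "g \<in> spoly R" and N: "m \<le> N" and top: "\<And>i. N < i \<Longrightarrow> g i = \<zero>"
  obtains u where "u \<in> spoly R" and "\<And>i. N \<le> i \<Longrightarrow> g i \<ominus> cyc_mult u i = \<zero>"
proof -
  \<comment> \<open>subtract (g N) t^(N-m) (t^m - c)\<close>
  define u where "u i = (if i = N - m then g N else \<zero>)" for i
  have a: "g N \<in> carrier R" by (rule spoly_carrier[OF g])
  have "u \<in> spoly R" by (rule spolyI[of _ "N - m"]) (simp_all add: u_def a)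
  moreover have "g i \<ominus> cyc_mult u i = \<zero>" if "N \<le> i" for i
    using that top[of i] N m_pos a
    unfolding u_def cyc_mult_monomial[OF a] by (auto simp: a_minus_def r_neg)
  ultimately show ?thesis by (rule that)
qed

lemma cyc_mult_high_surj:
  assumes "g \<in> spoly R"
  shows "\<exists>q\<in>spoly R. \<forall>n\<ge>m. cyc_mult q n = g n"
proof -
  have "\<forall>g\<in>spoly R. (\<forall>i\<ge>N. g i = \<zero>) \<longrightarrow> (\<exists>q\<in>spoly R. \<forall>n\<ge>m. cyc_mult q n = g n)" for N
  proof (induction N)
    case 0
    show ?case by (auto intro!: bexI[of _ "pzero R"] simp: cyc_mult_pzero)
  next
    case (Suc N)
    show ?case
    proof (intro ballI impI)
      fix g assume g: "g \<in> spoly R" and top: "\<forall>i\<ge>Suc N. g i = \<zero>"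
      show "\<exists>q\<in>spoly R. \<forall>n\<ge>m. cyc_mult q n = g n"
      proof (cases "N < m")
        case True
        thus ?thesis using top by (auto intro!: bexI[of _ "pzero R"] simp: cyc_mult_pzero)
      next
        case False
        then obtain u where u: "u \<in> spoly R" and cancel: "\<And>i. N \<le> i \<Longrightarrow> g i \<ominus> cyc_mult u i = \<zero>"
          using cyc_mult_cancel_top[OF g, of N] top by auto
        have uc: "\<And>i. u i \<in> carrier R" and gc: "\<And>i. g i \<in> carrier R"
          using spoly_carrier u g by auto
        define g' where "g' i = g i \<ominus> cyc_mult u i" for i
        have "g' \<in> spoly R"
          by (rule spolyI[of _ N]) (simp_all add: g'_def gc cyc_mult_closed[OF uc] cancel)
        then obtain q' where q': "q' \<in> spoly R" and eq: "\<forall>n\<ge>m. cyc_mult q' n = g' n"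
          using Suc.IH cancel by (auto simp: g'_def)
        have "padd R q' u \<in> spoly R" using q' u by (rule padd_spoly)
        moreover have "cyc_mult (padd R q' u) n = g n" if "m \<le> n" for n
          using eq that gc cyc_mult_closed[OF uc]
          by (simp add: cyc_mult_padd spoly_carrier[OF q'] uc g'_def a_minus_def a_assoc l_neg)
        ultimately show ?thesis by blast
      qed
    qed
  qed
  moreover obtain B where "\<And>i. B < i \<Longrightarrow> g i = \<zero>" using spoly_bounded[OF assms] by blast
  ultimately show ?thesis using assms by (meson Suc_le_lessD)
qed

lemma cyc_division_exists:
  assumes g: "g \<in> spoly R"
  shows "\<exists>q\<in>spoly R. \<exists>r\<in>petit_carrier R (cyc_poly R m c). g = padd R (skew_mult R \<sigma> q (cyc_poly R m c)) r"
proof -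
  obtain q where q: "q \<in> spoly R" and high: "\<forall>n\<ge>m. cyc_mult q n = g n"
    using cyc_mult_high_surj[OF g] by blast
  obtain Bg where Bg: "\<And>i. Bg < i \<Longrightarrow> g i = \<zero>" using spoly_bounded[OF g] by blast
  obtain Bq where Bq: "\<And>i. Bq < i \<Longrightarrow> q i = \<zero>" using spoly_bounded[OF q] by blast
  define r where "r n = g n \<ominus> cyc_mult q n" for n
  have qc: "\<And>i. q i \<in> carrier R" and gc: "\<And>i. g i \<in> carrier R"
    using spoly_carrier q g by auto
  have "r \<in> spoly R"
  proof (rule spolyI[of _ "Bg + Bq + m"])
    show "r i \<in> carrier R" for i using gc cyc_mult_closed[OF qc] by (simp add: r_def)
    show "r i = \<zero>" if "Bg + Bq + m < i" for i
      using that Bg Bq c_carrier by (simp add: r_def cyc_mult_def a_minus_def)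
  qed
  moreover have "\<forall>i\<ge>m. r i = \<zero>" using high gc by (simp add: r_def r_neg a_minus_def)
  moreover have "g = padd R (skew_mult R \<sigma> q (cyc_poly R m c)) r"
    using gc cyc_mult_closed[OF qc]
    by (auto simp: skew_mult_cyc_poly[OF qc] padd_def r_def a_minus_def a_comm a_lcomm r_neg)
  ultimately show ?thesis using q by (auto simp: petit_carrier_cyc_poly)
qed

lemma cyc_division_unique:
  assumes q: "q \<in> spoly R" "r \<in> petit_carrier R (cyc_poly R m c)"
    and q': "q' \<in> spoly R" "r' \<in> petit_carrier R (cyc_poly R m c)"
    and eq: "padd R (skew_mult R \<sigma> q (cyc_poly R m c)) r = padd R (skew_mult R \<sigma> q' (cyc_poly R m c)) r'"
  shows "r = r'"
proof -
  have qc: "\<And>i. q i \<in> carrier R" "\<And>i. q' i \<in> carrier R" using q(1) q'(1) spoly_carrier by auto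
  have rc: "\<And>i. r i \<in> carrier R" "\<And>i. r' i \<in> carrier R"
    using q(2) q'(2) spoly_carrier by (auto simp: petit_carrier_cyc_poly)
  have coeff: "cyc_mult q n \<oplus> r n = cyc_mult q' n \<oplus> r' n" for n
    using fun_cong[OF eq, of n] by (simp add: padd_def skew_mult_cyc_poly qc)
  define d where "d i = q i \<ominus> q' i" for i
  have "d \<in> spoly R"
    unfolding d_def a_minus_def using padd_spoly[OF q(1) pneg_spoly[OF q'(1)]] by (simp add: padd_def pneg_def)
  moreover have "cyc_mult d n = \<zero>" if "m \<le> n" for n
  proof -
    have "r n = \<zero>" "r' n = \<zero>" using that q(2) q'(2) by (auto simp: petit_carrier_cyc_poly)
    hence "cyc_mult q n = cyc_mult q' n" using coeff[of n] cyc_mult_closed qc by simp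
    moreover have "cyc_mult d n = cyc_mult q n \<ominus> cyc_mult q' n"
      unfolding d_def by (rule cyc_mult_diff) (simp_all add: qc)
    ultimately show ?thesis using cyc_mult_closed[OF qc(2)] by (simp add: a_minus_def r_neg)
  qed
  ultimately have "d i = \<zero>" for i by (rule cyc_mult_high_zero_imp_zero)
  hence "q = q'" using qc minus_eq_zero_imp_eq by (auto simp: d_def fun_eq_iff)
  thus ?thesis using coeff cyc_mult_closed[OF qc(2)] rc by (intro ext) simp
qed

lemma right_rem_cyc_poly:
  assumes "q \<in> spoly R" and "r \<in> petit_carrier R (cyc_poly R m c)"
    and "g = padd R (skew_mult R \<sigma> q (cyc_poly R m c)) r"
  shows "right_rem R \<sigma> g (cyc_poly R m c) = r"
  unfolding right_rem_altdef using assms cyc_division_unique by (intro the_equality) blast+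

lemma petit_mult_cyc_poly_closed:
  assumes "p \<in> spoly R" and "q \<in> spoly R"
  shows "petit_mult R \<sigma> (cyc_poly R m c) p q \<in> petit_carrier R (cyc_poly R m c)"
  using cyc_division_exists[OF skew_mult_spoly[OF assms]] right_rem_cyc_poly
  unfolding petit_mult_def by metis

lemma right_rem_pzero: "right_rem R \<sigma> (pzero R) (cyc_poly R m c) = pzero R"
proof (rule right_rem_cyc_poly[OF pzero_spoly])
  show "pzero R \<in> petit_carrier R (cyc_poly R m c)"
    using pzero_spoly by (simp add: petit_carrier_cyc_poly pzero_def)
  have "skew_mult R \<sigma> (pzero R) (cyc_poly R m c) = pzero R"
    by (rule skew_mult_pzero_left) (simp add: cyc_poly_def c_carrier)
  thus "pzero R = padd R (skew_mult R \<sigma> (pzero R) (cyc_poly R m c)) (pzero R)"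
    by (simp add: padd_def pzero_def)
qed

lemma petit_mult_pzero_right:
  "(\<And>i. p i \<in> carrier R) \<Longrightarrow> petit_mult R \<sigma> (cyc_poly R m c) p (pzero R) = pzero R"
  by (simp add: petit_mult_def skew_mult_pzero_right right_rem_pzero)

lemma petit_mult_pzero_left:
  "(\<And>i. p i \<in> carrier R) \<Longrightarrow> petit_mult R \<sigma> (cyc_poly R m c) (pzero R) p = pzero R"
  by (simp add: petit_mult_def skew_mult_pzero_left right_rem_pzero)

end

section \<open>Reduction of coefficients modulo a \<sigma>-stable ideal\<close>

lemma skew_mult_ring_hom:
  assumes R: "cring R" and S: "cring S" and h: "h \<in> ring_hom R S" and \<sigma>: "\<sigma> \<in> ring_hom R R"
    and \<tau>: "\<And>x. x \<in> carrier R \<Longrightarrow> \<tau> (h x) = h (\<sigma> x)"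
    and p: "\<And>i. p i \<in> carrier R" and q: "\<And>i. q i \<in> carrier R"
  shows "h (skew_mult R \<sigma> p q n) = skew_mult S \<tau> (\<lambda>i. h (p i)) (\<lambda>i. h (q i)) n"
proof -
  interpret h: ring_hom_cring R S h
    by (rule ring_hom_cringI[OF ring_hom_ringI2[OF cring.axioms(1)[OF R] cring.axioms(1)[OF S] h] R S])
  interpret skew_poly R \<sigma> by (intro skew_poly.intro skew_poly_axioms.intro R \<sigma>)
  have \<tau>_pow: "(\<tau> ^^ i) (h x) = h ((\<sigma> ^^ i) x)" if "x \<in> carrier R" for x i
    using that by (induction i) (simp_all add: \<tau>)
  have "h (skew_mult R \<sigma> p q n) = (\<Oplus>\<^bsub>S\<^esub> i\<in>{..n}. h (p i \<otimes>\<^bsub>R\<^esub> (\<sigma> ^^ i) (q (n - i))))"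
    unfolding skew_mult_def using p q by (subst h.hom_finsum) (auto simp: comp_def)
  also have "\<dots> = skew_mult S \<tau> (\<lambda>i. h (p i)) (\<lambda>i. h (q i)) n"
    unfolding skew_mult_def by (intro h.S.finsum_cong') (use p q \<tau>_pow in auto)
  finally show ?thesis .
qed

locale cyc_reduction = cyc_division +
  fixes J
  assumes J_ideal: "ideal J R" and sigma_J: "\<And>x. x \<in> J \<Longrightarrow> \<sigma> x \<in> J"
    and sigma_periodic: "\<And>x. x \<in> carrier R \<Longrightarrow> (\<sigma> ^^ m) x = x"
begin

sublocale quotient: cring "R Quot J"
  by (rule ideal.quotient_is_cring[OF J_ideal is_cring])

sublocale coset: ring_hom_cring R "R Quot J" "(+>) J"
  by (rule ideal.rcos_ring_hom_cring[OF J_ideal is_cring])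

lemma J_subset: "J \<subseteq> carrier R"
  using J_ideal by (simp add: ideal_def additive_subgroup.a_subset)

lemma coset_eq_iff:
  "x \<in> carrier R \<Longrightarrow> y \<in> carrier R \<Longrightarrow> J +> x = J +> y \<longleftrightarrow> x \<ominus> y \<in> J"
  using quotient_eq_iff_same_a_r_cos[OF J_ideal] by blast

lemma coset_eq_zero_iff: "x \<in> carrier R \<Longrightarrow> J +> x = \<zero>\<^bsub>R Quot J\<^esub> \<longleftrightarrow> x \<in> J"
  using coset_eq_iff[of x \<zero>] coset.hom_zero by (simp add: a_minus_def)

lemma carrier_quotient: "carrier (R Quot J) = (+>) J ` carrier R"
  unfolding FactRing_def A_RCOSETS_def' by auto

lemma sigma_pow_J: "x \<in> J \<Longrightarrow> (\<sigma> ^^ i) x \<in> J"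
  by (induction i) (simp_all add: sigma_J)

lemma sigma_bar_coset:
  assumes x: "x \<in> carrier R"
  shows "sigma_bar R J \<sigma> (J +> x) = J +> \<sigma> x"
proof -
  have "x \<in> J +> x"
    by (rule abelian_subgroup.a_rcos_self[OF abelian_subgroupI3[OF ideal.axioms(1)[OF J_ideal]]])
       (simp_all add: is_abelian_group x)
  then have "(SOME u. u \<in> J +> x) \<in> J +> x" by (rule someI)
  then obtain j where j: "j \<in> J" and ju: "(SOME u. u \<in> J +> x) = j \<oplus> x"
    by (auto simp: a_r_coset_def')
  have "\<sigma> (j \<oplus> x) \<ominus> \<sigma> x = \<sigma> j"
    using j J_subset x by (auto simp: a_minus_def a_assoc r_neg)
  moreover have "J +> \<sigma> (j \<oplus> x) = J +> \<sigma> x \<longleftrightarrow> \<sigma> (j \<oplus> x) \<ominus> \<sigma> x \<in> J"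
    by (rule coset_eq_iff) (use j J_subset x in auto)
  ultimately have "J +> \<sigma> (j \<oplus> x) = J +> \<sigma> x" using sigma_J[OF j] by simp
  thus ?thesis unfolding sigma_bar_def ju .
qed

lemma sigma_bar_hom: "sigma_bar R J \<sigma> \<in> ring_hom (R Quot J) (R Quot J)"
proof -
  show ?thesis
  proof (rule ring_hom_memI)
    fix X Y assume "X \<in> carrier (R Quot J)" "Y \<in> carrier (R Quot J)"
    then obtain x y where "x \<in> carrier R" "X = J +> x" "y \<in> carrier R" "Y = J +> y"
      using carrier_quotient by auto
    thus "sigma_bar R J \<sigma> X \<in> carrier (R Quot J)"
      and "sigma_bar R J \<sigma> (X \<otimes>\<^bsub>R Quot J\<^esub> Y) = sigma_bar R J \<sigma> X \<otimes>\<^bsub>R Quot J\<^esub> sigma_bar R J \<sigma> Y"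
      and "sigma_bar R J \<sigma> (X \<oplus>\<^bsub>R Quot J\<^esub> Y) = sigma_bar R J \<sigma> X \<oplus>\<^bsub>R Quot J\<^esub> sigma_bar R J \<sigma> Y"
      by (simp_all add: sigma_bar_coset flip: coset.hom_mult coset.hom_add)
  next
    show "sigma_bar R J \<sigma> \<one>\<^bsub>R Quot J\<^esub> = \<one>\<^bsub>R Quot J\<^esub>"
      using sigma_bar_coset[of \<one>] by (simp flip: coset.hom_one)
  qed
qed

text \<open>Injectivity is where the periodicity of \<sigma> is needed: \<sigma>(x) \<in> J forces x = \<sigma>^m(x) \<in> J.\<close>
lemma inj_on_sigma_bar: "inj_on (sigma_bar R J \<sigma>) (carrier (R Quot J))"
proof (rule inj_onI)
  fix X Y assume "X \<in> carrier (R Quot J)" "Y \<in> carrier (R Quot J)"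
    and eq: "sigma_bar R J \<sigma> X = sigma_bar R J \<sigma> Y"
  then obtain x y where x: "x \<in> carrier R" "X = J +> x" and y: "y \<in> carrier R" "Y = J +> y"
    using carrier_quotient by auto
  have "\<sigma> (x \<ominus> y) \<in> J"
    using eq coset_eq_iff[of "\<sigma> x" "\<sigma> y"] x y by (simp add: sigma_bar_coset a_minus_def)
  hence "(\<sigma> ^^ (m - 1)) (\<sigma> (x \<ominus> y)) \<in> J" by (rule sigma_pow_J)
  hence "(\<sigma> ^^ m) (x \<ominus> y) \<in> J" using m_pos by (metis Suc_diff_1 comp_apply funpow_Suc_right)
  hence "x \<ominus> y \<in> J" using sigma_periodic x y by simp
  thus "X = Y" using coset_eq_iff x y by simp
qed

sublocale quotient: cyc_division "R Quot J" "sigma_bar R J \<sigma>" m "J +> c"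
  by unfold_locales (simp_all add: sigma_bar_hom m_pos c_carrier)

lemma reduce_coeffs_carrier: "p i \<in> carrier R \<Longrightarrow> reduce_coeffs R J p i \<in> carrier (R Quot J)"
  by (simp add: reduce_coeffs_def)

lemma reduce_coeffs_spoly:
  assumes p: "p \<in> spoly R"
  shows "reduce_coeffs R J p \<in> spoly (R Quot J)"
proof -
  obtain B where "\<And>i. B < i \<Longrightarrow> p i = \<zero>" using spoly_bounded[OF p] by blast
  thus ?thesis
    by (intro quotient.spolyI[of _ B]) (simp_all add: reduce_coeffs_def spoly_carrier[OF p])
qed

lemma reduce_coeffs_cyc_poly: "reduce_coeffs R J (cyc_poly R m c) = cyc_poly (R Quot J) m (J +> c)"
  by (rule ext) (simp add: reduce_coeffs_def cyc_poly_def c_carrier)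

lemma reduce_coeffs_padd:
  "(\<And>i. p i \<in> carrier R) \<Longrightarrow> (\<And>i. q i \<in> carrier R) \<Longrightarrow>
    reduce_coeffs R J (padd R p q) = padd (R Quot J) (reduce_coeffs R J p) (reduce_coeffs R J q)"
  by (rule ext) (simp add: reduce_coeffs_def padd_def)

lemma reduce_coeffs_skew_mult:
  "(\<And>i. p i \<in> carrier R) \<Longrightarrow> (\<And>i. q i \<in> carrier R) \<Longrightarrow>
    reduce_coeffs R J (skew_mult R \<sigma> p q)
      = skew_mult (R Quot J) (sigma_bar R J \<sigma>) (reduce_coeffs R J p) (reduce_coeffs R J q)"
  unfolding reduce_coeffs_def
  by (rule ext, rule skew_mult_ring_hom[OF is_cring quotient.is_cring coset.homh sigma_hom])
     (simp_all add: sigma_bar_coset)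

lemma reduce_coeffs_petit_mult:
  assumes p: "p \<in> spoly R" and q: "q \<in> spoly R"
  shows "reduce_coeffs R J (petit_mult R \<sigma> (cyc_poly R m c) p q)
    = petit_mult (R Quot J) (sigma_bar R J \<sigma>) (cyc_poly (R Quot J) m (J +> c))
        (reduce_coeffs R J p) (reduce_coeffs R J q)"
proof -
  obtain q0 r where q0: "q0 \<in> spoly R" and r: "r \<in> petit_carrier R (cyc_poly R m c)"
    and div: "skew_mult R \<sigma> p q = padd R (skew_mult R \<sigma> q0 (cyc_poly R m c)) r"
    using cyc_division_exists[OF skew_mult_spoly[OF p q]] by blast
  have rc: "\<And>i. r i \<in> carrier R" using r by (simp add: petit_carrier_cyc_poly spoly_carrier)
  have fc: "\<And>i. cyc_poly R m c i \<in> carrier R" by (simp add: cyc_poly_def c_carrier)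
  have "petit_mult R \<sigma> (cyc_poly R m c) p q = r"
    unfolding petit_mult_def using q0 r div by (rule right_rem_cyc_poly)
  moreover have "reduce_coeffs R J r \<in> petit_carrier (R Quot J) (cyc_poly (R Quot J) m (J +> c))"
    using r reduce_coeffs_spoly
    by (simp add: petit_carrier_cyc_poly quotient.petit_carrier_cyc_poly reduce_coeffs_def)
  moreover have "skew_mult (R Quot J) (sigma_bar R J \<sigma>) (reduce_coeffs R J p) (reduce_coeffs R J q)
      = padd (R Quot J) (skew_mult (R Quot J) (sigma_bar R J \<sigma>) (reduce_coeffs R J q0)
          (cyc_poly (R Quot J) m (J +> c))) (reduce_coeffs R J r)"
    using arg_cong[OF div, of "reduce_coeffs R J"] spoly_carrier p q q0 rc fc
    by (simp add: reduce_coeffs_skew_mult reduce_coeffs_padd skew_mult_closed reduce_coeffs_cyc_poly)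
  ultimately show ?thesis unfolding petit_mult_def
    using quotient.right_rem_cyc_poly reduce_coeffs_spoly[OF q0] by metis
qed

lemma reduce_coeffs_eq_iff:
  "(\<And>i. p i \<in> carrier R) \<Longrightarrow> (\<And>i. q i \<in> carrier R) \<Longrightarrow>
    reduce_coeffs R J p = reduce_coeffs R J q \<longleftrightarrow> (\<forall>i. p i \<ominus> q i \<in> J)"
  by (simp add: reduce_coeffs_def fun_eq_iff coset_eq_iff)

lemma reduce_coeffs_eq_pzero_iff:
  "(\<And>i. p i \<in> carrier R) \<Longrightarrow> reduce_coeffs R J p = pzero (R Quot J) \<longleftrightarrow> (\<forall>i. p i \<in> J)"
  by (simp add: reduce_coeffs_def pzero_def fun_eq_iff coset_eq_zero_iff)

lemma reduce_coeffs_image: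
  "reduce_coeffs R J ` petit_carrier R (cyc_poly R m c)
    = petit_carrier (R Quot J) (cyc_poly (R Quot J) m (J +> c))" (is "_ ` ?Lam = ?Lam_bar")
proof
  show "reduce_coeffs R J ` ?Lam \<subseteq> ?Lam_bar"
    using reduce_coeffs_spoly
    by (auto simp: petit_carrier_cyc_poly quotient.petit_carrier_cyc_poly reduce_coeffs_def)
next
  show "?Lam_bar \<subseteq> reduce_coeffs R J ` ?Lam"
  proof
    fix P assume "P \<in> ?Lam_bar"
    hence P: "P \<in> spoly (R Quot J)" "\<forall>i\<ge>m. P i = \<zero>\<^bsub>R Quot J\<^esub>"
      by (auto simp: quotient.petit_carrier_cyc_poly)
    have "\<exists>x\<in>carrier R. P i = J +> x" for i
      using quotient.spoly_carrier[OF P(1), of i] by (simp add: carrier_quotient image_iff)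
    then obtain lift where lift: "\<And>i. lift i \<in> carrier R \<and> P i = J +> lift i" by metis
    define p where "p i = (if i < m then lift i else \<zero>)" for i
    have "p \<in> ?Lam"
      using lift by (auto simp: petit_carrier_cyc_poly p_def intro: spolyI[of _ m])
    moreover have "reduce_coeffs R J p = P"
      using lift P(2) by (auto simp: reduce_coeffs_def p_def fun_eq_iff)
    ultimately show "P \<in> reduce_coeffs R J ` ?Lam" by blast
  qed
qed

lemma petit_mult_ideal:
  assumes p: "p \<in> spoly R" and q: "q \<in> spoly R" and qJ: "\<forall>i. q i \<in> J"
  shows "\<forall>i. petit_mult R \<sigma> (cyc_poly R m c) p q i \<in> J"
    and "\<forall>i. petit_mult R \<sigma> (cyc_poly R m c) q p i \<in> J"
proof -
  have red_q: "reduce_coeffs R J q = pzero (R Quot J)"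
    using qJ spoly_carrier[OF q] reduce_coeffs_eq_pzero_iff by blast
  have red_p: "\<And>i. reduce_coeffs R J p i \<in> carrier (R Quot J)"
    using reduce_coeffs_carrier spoly_carrier[OF p] by blast
  have "reduce_coeffs R J (petit_mult R \<sigma> (cyc_poly R m c) p q) = pzero (R Quot J)"
    and "reduce_coeffs R J (petit_mult R \<sigma> (cyc_poly R m c) q p) = pzero (R Quot J)"
    by (simp_all add: reduce_coeffs_petit_mult p q red_q red_p
        quotient.petit_mult_pzero_right quotient.petit_mult_pzero_left)
  moreover have "\<And>p q. p \<in> spoly R \<Longrightarrow> q \<in> spoly R \<Longrightarrow> petit_mult R \<sigma> (cyc_poly R m c) p q i \<in> carrier R" for i
    using petit_mult_cyc_poly_closed by (auto simp: petit_carrier_cyc_poly spoly_carrier)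
  ultimately show "\<forall>i. petit_mult R \<sigma> (cyc_poly R m c) p q i \<in> J"
    and "\<forall>i. petit_mult R \<sigma> (cyc_poly R m c) q p i \<in> J"
    using p q reduce_coeffs_eq_pzero_iff by auto
qed

theorem petit_algebra_reduction:
  assumes "A \<subseteq> carrier R"
  defines "f \<equiv> cyc_poly R m c" and "S \<equiv> R Quot J" and "red \<equiv> reduce_coeffs R J"
  defines "Lam \<equiv> petit_carrier R f" and "fb \<equiv> cyc_poly S m (J +> c)"
  defines "ILam \<equiv> {p \<in> Lam. \<forall>i. p i \<in> J}"
  shows "(ILam \<subseteq> Lam \<and> pzero R \<in> ILam
        \<and> (\<forall>p\<in>ILam. \<forall>q\<in>ILam. padd R p q \<in> ILam) \<and> (\<forall>p\<in>ILam. pneg R p \<in> ILam)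
        \<and> (\<forall>p\<in>Lam. \<forall>q\<in>ILam. petit_mult R \<sigma> f p q \<in> ILam \<and> petit_mult R \<sigma> f q p \<in> ILam))
     \<and> (cring S \<and> sigma_bar R J \<sigma> \<in> ring_hom S S \<and> inj_on (sigma_bar R J \<sigma>) (carrier S))
     \<and> red ` Lam = petit_carrier S fb
     \<and> (\<forall>p\<in>Lam. \<forall>q\<in>Lam. red p = red q \<longleftrightarrow> padd R p (pneg R q) \<in> ILam)
     \<and> (\<forall>p\<in>Lam. \<forall>q\<in>Lam. red (padd R p q) = padd S (red p) (red q))
     \<and> (\<forall>p\<in>Lam. \<forall>q\<in>Lam. red (petit_mult R \<sigma> f p q) = petit_mult S (sigma_bar R J \<sigma>) fb (red p) (red q))
     \<and> red (pone R) = pone S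
     \<and> (\<forall>a\<in>A. \<forall>p\<in>Lam. red (psmul R a p) = psmul S (J +> a) (red p))"
proof -
  have Lam: "Lam = {p \<in> spoly R. \<forall>i\<ge>m. p i = \<zero>}"
    by (simp add: Lam_def f_def petit_carrier_cyc_poly)
  have Lam_carrier: "p i \<in> carrier R" if "p \<in> Lam" for p i
    using that spoly_carrier by (auto simp: Lam)
  have Lam_padd: "padd R p q \<in> Lam" if "p \<in> Lam" "q \<in> Lam" for p q
    using that padd_spoly by (auto simp: Lam padd_def)
  have Lam_pneg: "pneg R p \<in> Lam" if "p \<in> Lam" for p
    using that pneg_spoly by (auto simp: Lam pneg_def)
  have J: "additive_subgroup J R" using J_ideal by (rule ideal.axioms(1))
  show ?thesis
  proof (intro conjI ballI)
    show "pzero R \<in> ILam"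
      using pzero_spoly additive_subgroup.zero_closed[OF J] by (simp add: ILam_def Lam pzero_def)
    show "padd R p q \<in> ILam" if "p \<in> ILam" "q \<in> ILam" for p q
      using that Lam_padd additive_subgroup.a_closed[OF J] by (auto simp: ILam_def padd_def)
    show "pneg R p \<in> ILam" if "p \<in> ILam" for p
      using that Lam_pneg additive_subgroup.a_inv_closed[OF J] by (auto simp: ILam_def pneg_def)
    show "petit_mult R \<sigma> f p q \<in> ILam" "petit_mult R \<sigma> f q p \<in> ILam" if "p \<in> Lam" "q \<in> ILam" for p q
      using that petit_mult_ideal[of p q] petit_mult_cyc_poly_closed[of p q]
        petit_mult_cyc_poly_closed[of q p]
      by (auto simp: ILam_def Lam f_def petit_carrier_cyc_poly)
    show "red p = red q \<longleftrightarrow> padd R p (pneg R q) \<in> ILam" if "p \<in> Lam" "q \<in> Lam" for p q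
      using that Lam_padd Lam_pneg Lam_carrier reduce_coeffs_eq_iff
      by (simp add: ILam_def red_def padd_def pneg_def a_minus_def)
    show "red (padd R p q) = padd S (red p) (red q)" if "p \<in> Lam" "q \<in> Lam" for p q
      using that Lam_carrier by (simp add: red_def S_def reduce_coeffs_padd)
    show "red (petit_mult R \<sigma> f p q) = petit_mult S (sigma_bar R J \<sigma>) fb (red p) (red q)"
      if "p \<in> Lam" "q \<in> Lam" for p q
      using that by (simp add: Lam red_def S_def f_def fb_def reduce_coeffs_petit_mult)
    show "red (psmul R a p) = psmul S (J +> a) (red p)" if "a \<in> A" "p \<in> Lam" for a p
      using that assms(1) Lam_carrier by (auto simp: red_def S_def reduce_coeffs_def psmul_def)
    show "red ` Lam = petit_carrier S fb"
      unfolding red_def Lam_def S_def fb_def f_def by (rule reduce_coeffs_image)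
    show "red (pone R) = pone S" by (simp add: red_def S_def pone_def reduce_coeffs_def fun_eq_iff)
  qed (auto simp: ILam_def S_def sigma_bar_hom inj_on_sigma_bar quotient.is_cring)
qed

end

section \<open>The natural order of a nonassociative cyclic algebra\<close>

lemma cring_ring_on:
  assumes "(0::'a::comm_ring_1) \<in> A" "1 \<in> A" "\<And>x y. x \<in> A \<Longrightarrow> y \<in> A \<Longrightarrow> x + y \<in> A"
    "\<And>x y. x \<in> A \<Longrightarrow> y \<in> A \<Longrightarrow> x * y \<in> A" "\<And>x. x \<in> A \<Longrightarrow> - x \<in> A"
  shows "cring (ring_on A)"
proof (rule cringI)
  show "abelian_group (ring_on A)"
  proof (rule abelian_groupI)
    fix x assume "x \<in> carrier (ring_on A)"
    thus "\<exists>y\<in>carrier (ring_on A). y \<oplus>\<^bsub>ring_on A\<^esub> x = \<zero>\<^bsub>ring_on A\<^esub>"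
      using assms by (intro bexI[of _ "- x"]) (auto simp: ring_on_def)
  qed (use assms in \<open>auto simp: ring_on_def algebra_simps\<close>)
  show "comm_monoid (ring_on A)"
    by (rule comm_monoidI) (use assms in \<open>auto simp: ring_on_def algebra_simps\<close>)
qed (auto simp: ring_on_def algebra_simps)

lemma algebraic_integers_eq: "algebraic_integers = {x :: 'a::field_char_0. algebraic_int x}"
  by (auto simp: algebraic_integers_def algebraic_int_altdef_ipoly)

lemma cring_algebraic_integers: "cring (ring_on (algebraic_integers :: 'a::field_char_0 set))"
  unfolding algebraic_integers_eq
  by (rule cring_ring_on) (auto intro: algebraic_int_plus algebraic_int_times)

lemma comm_ring_hom_if_surj:
  fixes \<sigma> :: "'a::comm_ring_1 \<Rightarrow> 'a"
  assumes "surj \<sigma>" and add: "\<And>x y. \<sigma> (x + y) = \<sigma> x + \<sigma> y" and mult: "\<And>x y. \<sigma> (x * y) = \<sigma> x * \<sigma> y"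
  shows "comm_ring_hom \<sigma>"
proof
  show "\<sigma> 0 = 0" using add[of 0 0] by simp
  obtain y where "\<sigma> y = 1" using \<open>surj \<sigma>\<close> by (metis surjD)
  thus "\<sigma> 1 = 1" using mult[of 1 y] by simp
qed (simp_all add: add mult)

lemma algebraic_int_hom_image:
  fixes \<sigma> :: "'a::field_char_0 \<Rightarrow> 'b::field_char_0"
  assumes "comm_ring_hom \<sigma>" and "algebraic_int x"
  shows "algebraic_int (\<sigma> x)"
proof -
  interpret comm_ring_hom \<sigma> by fact
  obtain p :: "int poly" where p: "poly (of_int_poly p) x = 0" "lead_coeff p = 1"
    using assms(2) unfolding algebraic_int_altdef_ipoly by blast
  have "map_poly \<sigma> (of_int_poly p) = of_int_poly p"
    by (simp add: map_poly_map_poly comp_def hom_of_int)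
  hence "poly (of_int_poly p) (\<sigma> x) = \<sigma> (poly (of_int_poly p) x)"
    by (metis poly_map_poly)
  thus ?thesis using p unfolding algebraic_int_altdef_ipoly by auto
qed

lemma ring_hom_ring_on:
  assumes "comm_ring_hom \<sigma>" and "\<sigma> ` A \<subseteq> A"
  shows "\<sigma> \<in> ring_hom (ring_on A) (ring_on A)"
proof -
  interpret comm_ring_hom \<sigma> by fact
  show ?thesis
    by (rule ring_hom_memI) (use assms(2) in \<open>auto simp: ring_on_def hom_add hom_mult\<close>)
qed

lemma (in ring) genideal_stable:
  assumes h: "h \<in> ring_hom R R" and I: "I \<subseteq> carrier R" and fixed: "\<And>x. x \<in> I \<Longrightarrow> h x = x"
    and x: "x \<in> genideal R I"
  shows "h x \<in> genideal R I"
proof -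
  have "ideal {r \<in> carrier R. h r \<in> genideal R I} R"
    by (rule ring_hom_ring.ideal_vimage[OF ring_hom_ringI2[OF ring_axioms ring_axioms h]])
       (rule genideal_ideal[OF I])
  moreover have "I \<subseteq> {r \<in> carrier R. h r \<in> genideal R I}"
    using I fixed genideal_self[OF I] by auto
  ultimately have "genideal R I \<subseteq> {r \<in> carrier R. h r \<in> genideal R I}"
    by (rule genideal_minimal)
  thus ?thesis using x by blast
qed

theorem theorem1:
  fixes \<sigma> :: "'a::field_char_0 \<Rightarrow> 'a" and m :: nat and F :: "'a set"
    and d :: 'a and I :: "'a set"
  defines "OK \<equiv> (algebraic_integers :: 'a set)"
    and "OKF \<equiv> algebraic_integers \<inter> F"
    and "IOK \<equiv> genideal (ring_on (algebraic_integers :: 'a set)) I"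
  assumes numfield: "finite_dim_over_Q (UNIV :: 'a set)"
    and aut: "bij \<sigma>" "\<forall>x y. \<sigma> (x + y) = \<sigma> x + \<sigma> y" "\<forall>x y. \<sigma> (x * y) = \<sigma> x * \<sigma> y"
    and order: "0 < m" "\<sigma> ^^ m = id" "\<forall>k. 0 < k \<and> k < m \<longrightarrow> \<sigma> ^^ k \<noteq> id"
    and fixF: "F = {x. \<sigma> x = x}"
    and unit_d: "d \<in> OK" "d \<noteq> 0" "inverse d \<in> OK"
    and irred: "skew_irreducible (ring_on (UNIV :: 'a set)) \<sigma> (cyc_poly (ring_on UNIV) m d)"
    and ideal_I: "ideal I (ring_on OKF)" "I \<noteq> {0}"
  shows
    "let R = ring_on OK;
         f = cyc_poly R m d;
         Lam = petit_carrier R f;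
         ILam = {p \<in> Lam. \<forall>i. p i \<in> IOK};
         S = R Quot IOK;
         sb = sigma_bar R IOK \<sigma>;
         fb = cyc_poly S m (a_r_coset R IOK d);
         red = reduce_coeffs R IOK
     in
       \<comment> \<open>I Lambda is a two-sided ideal of Lambda\<close>
       (ILam \<subseteq> Lam \<and> pzero R \<in> ILam
        \<and> (\<forall>p\<in>ILam. \<forall>q\<in>ILam. padd R p q \<in> ILam) \<and> (\<forall>p\<in>ILam. pneg R p \<in> ILam)
        \<and> (\<forall>p\<in>Lam. \<forall>q\<in>ILam. petit_mult R \<sigma> f p q \<in> ILam \<and> petit_mult R \<sigma> f q p \<in> ILam))
       \<comment> \<open>the target is a generalized nonassociative cyclic algebra (S/S0, sigma-bar, d-bar)\<close>
     \<and> (cring S \<and> sb \<in> ring_hom S S \<and> inj_on sb (carrier S))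
       \<comment> \<open>reduction of coefficients induces an isomorphism Lambda / I Lambda to it\<close>
     \<and> red ` Lam = petit_carrier S fb
     \<and> (\<forall>p\<in>Lam. \<forall>q\<in>Lam. red p = red q \<longleftrightarrow> padd R p (pneg R q) \<in> ILam)
     \<and> (\<forall>p\<in>Lam. \<forall>q\<in>Lam. red (padd R p q) = padd S (red p) (red q))
     \<and> (\<forall>p\<in>Lam. \<forall>q\<in>Lam. red (petit_mult R \<sigma> f p q) = petit_mult S sb fb (red p) (red q))
     \<and> red (pone R) = pone S
     \<and> (\<forall>a\<in>OKF. \<forall>p\<in>Lam. red (psmul R a p) = psmul S (a_r_coset R IOK a) (red p))"
proof -
  define R where "R = ring_on OK"
  interpret R: cring R unfolding R_def OK_def by (rule cring_algebraic_integers)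
  have hom: "comm_ring_hom \<sigma>" using aut by (intro comm_ring_hom_if_surj) (auto simp: bij_is_surj)
  have sigma: "\<sigma> \<in> ring_hom R R"
    unfolding R_def OK_def algebraic_integers_eq
    using algebraic_int_hom_image[OF hom] by (intro ring_hom_ring_on[OF hom]) auto
  have OKF: "OKF \<subseteq> carrier R" by (auto simp: R_def OKF_def OK_def ring_on_def)
  have I: "I \<subseteq> OKF"
    using additive_subgroup.a_subset[OF ideal.axioms(1)[OF ideal_I(1)]] by (simp add: ring_on_def)
  have IOK: "IOK = genideal R I" by (simp add: IOK_def R_def OK_def)
  interpret cyc_reduction R \<sigma> m d IOK
  proof (intro cyc_reduction.intro cyc_reduction_axioms.intro cyc_division.intro
      cyc_division_axioms.intro skew_poly.intro skew_poly_axioms.intro)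
    show "ideal IOK R" unfolding IOK using I OKF by (intro R.genideal_ideal) auto
    show "\<sigma> x \<in> IOK" if "x \<in> IOK" for x
      unfolding IOK using that I OKF fixF by (intro R.genideal_stable[OF sigma]) (auto simp: OKF_def IOK)
  qed (use R.is_cring sigma order unit_d in \<open>auto simp: R_def OK_def ring_on_def\<close>)
  show ?thesis
    using petit_algebra_reduction[OF OKF] unfolding Let_def R_def by simp
qed

end
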